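(* Let $P:\mathcal C^{op}\to\mathbf{Pos}$ be a doctrine and $\mathsf K=(K,\kappa,\mu,\nu)$ a comonad on $P$ in $\mathbf{IdxPos}$. Let $\mathcal C_K$, $P^{\mathsf K}$ and $(U,u):P^{\mathsf K}\to P$ be as follows: $\mathcal C_K$ is the category of $K$-coalgebras, $P^{\mathsf K}(C,c)=\{\alpha\in PC\mid\alpha\le P(c)(\kappa_C\alpha)\}$ with reindexing by restriction of that of $P$, $U$ is the forgetful functor and $u$ the family of inclusions $P^{\mathsf K}(C,c)\hookrightarrow PC$. Let $\hat K:\mathcal C\to\mathcal C_K$ be the cofree coalgebra functor $\hat KX=(KX,\mu_X)$, and let $\eta^{\mathsf K}:\mathrm{Id}_{\mathcal C_K}\Rightarrow\hat KU$ be given by $\eta^{\mathsf K}_{(X,c)}=c$. Then $\kappa$ (with components $\kappa_X:PX\to P^{\mathsf K}(KX,\mu_X)$) defines a 1-arrow $(\hat K,\kappa):P\to P^{\mathsf K}$, and $(U,u)\dashv(\hat K,\kappa)$ is an adjunction in $\mathbf{IdxPos}$ with unit $\eta^{\mathsf K}$ and counit $\nu$.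
   Context: A doctrine is a functor $P:\mathcal C^{op}\to\mathbf{Pos}$; for $t:X\to Y$, $P(t):PY\to PX$ is reindexing. In the 2-category $\mathbf{IdxPos}$, a 1-arrow $(F,f):P\to Q$ (with $P:\mathcal C^{op}\to\mathbf{Pos}$, $Q:\mathcal D^{op}\to\mathbf{Pos}$) is a functor $F:\mathcal C\to\mathcal D$ with a natural transformation $f:P\Rightarrow Q\circ F^{op}$; a 2-arrow $\theta:(F,f)\Rightarrow(F',f')$ is a natural transformation $\theta:F\Rightarrow F'$ with $f_X(\alpha)\le Q(\theta_X)(f'_X(\alpha))$ for all $X,\alpha$; composition of $(G,g)$ then $(F,f)$ is $(FG,(fG^{op})\cdot g)$ (components $f_{GX}\circ g_X$), and 2-arrows compose as natural transformations. A comonad on $P$ in $\mathbf{IdxPos}$ amounts to $(K,\kappa,\mu,\nu)$ where $(K,\mu,\nu)$ is a comonad on $\mathcal C$, $\kappa:P\Rightarrow PK^{op}$ is natural, and for all $X$, $\kappa_X\le P(\mu_X)\circ\kappa_{KX}\circ\kappa_X$ and $\kappa_X\le P(\nu_X)$ pointwise. Adjunctions in $\mathbf{IdxPos}$ are in the usual 2-categorical sense. $K$-coalgebras are pairs $(C,c:C\to KC)$ with $\nu_C c=\mathrm{id}$, $\mu_C c=Kc\circ c$. *)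

theory Defs
  imports Main
begin

record ('o,'a) cat =
  Ob  :: "'o set"
  Ar  :: "'a set"
  Dom :: "'a \<Rightarrow> 'o"
  Cod :: "'a \<Rightarrow> 'o"
  Idt :: "'o \<Rightarrow> 'a"
  Cmp :: "'a \<Rightarrow> 'a \<Rightarrow> 'a"   (* Cmp C g f = g after f *)

definition hom :: "('o,'a) cat \<Rightarrow> 'o \<Rightarrow> 'o \<Rightarrow> 'a set" where
  "hom C X Y = {f \<in> Ar C. Dom C f = X \<and> Cod C f = Y}"

definition category :: "('o,'a) cat \<Rightarrow> bool" where
  "category C \<longleftrightarrow>
     (\<forall>f\<in>Ar C. Dom C f \<in> Ob C \<and> Cod C f \<in> Ob C) \<and>
     (\<forall>X\<in>Ob C. Idt C X \<in> hom C X X) \<and>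
     (\<forall>f\<in>Ar C. \<forall>g\<in>Ar C. Cod C f = Dom C g \<longrightarrow> Cmp C g f \<in> hom C (Dom C f) (Cod C g)) \<and>
     (\<forall>f\<in>Ar C. Cmp C (Idt C (Cod C f)) f = f \<and> Cmp C f (Idt C (Dom C f)) = f) \<and>
     (\<forall>f\<in>Ar C. \<forall>g\<in>Ar C. \<forall>h\<in>Ar C. Cod C f = Dom C g \<longrightarrow> Cod C g = Dom C h \<longrightarrow>
        Cmp C h (Cmp C g f) = Cmp C (Cmp C h g) f)"

type_synonym ('o,'a,'o2,'a2) ftr = "('o \<Rightarrow> 'o2) \<times> ('a \<Rightarrow> 'a2)"

abbreviation fo :: "('o,'a,'o2,'a2) ftr \<Rightarrow> 'o \<Rightarrow> 'o2" where "fo F \<equiv> fst F"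
abbreviation fa :: "('o,'a,'o2,'a2) ftr \<Rightarrow> 'a \<Rightarrow> 'a2" where "fa F \<equiv> snd F"

definition is_functor :: "('o,'a) cat \<Rightarrow> ('o2,'a2) cat \<Rightarrow> ('o,'a,'o2,'a2) ftr \<Rightarrow> bool" where
  "is_functor C D F \<longleftrightarrow> category C \<and> category D \<and>
     (\<forall>X\<in>Ob C. fo F X \<in> Ob D) \<and>
     (\<forall>f\<in>Ar C. fa F f \<in> hom D (fo F (Dom C f)) (fo F (Cod C f))) \<and>
     (\<forall>X\<in>Ob C. fa F (Idt C X) = Idt D (fo F X)) \<and>
     (\<forall>f\<in>Ar C. \<forall>g\<in>Ar C. Cod C f = Dom C g \<longrightarrow>
        fa F (Cmp C g f) = Cmp D (fa F g) (fa F f))"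

definition ftr_id :: "('o,'a,'o,'a) ftr" where
  "ftr_id = (\<lambda>X. X, \<lambda>f. f)"

definition ftr_comp :: "('o2,'a2,'o3,'a3) ftr \<Rightarrow> ('o,'a,'o2,'a2) ftr \<Rightarrow> ('o,'a,'o3,'a3) ftr" where
  "ftr_comp G F = (\<lambda>X. fo G (fo F X), \<lambda>f. fa G (fa F f))"

definition nat_trans :: "('o,'a) cat \<Rightarrow> ('o2,'a2) cat \<Rightarrow> ('o,'a,'o2,'a2) ftr \<Rightarrow> ('o,'a,'o2,'a2) ftr
     \<Rightarrow> ('o \<Rightarrow> 'a2) \<Rightarrow> bool" where
  "nat_trans C D F G \<theta> \<longleftrightarrow> is_functor C D F \<and> is_functor C D G \<and>
     (\<forall>X\<in>Ob C. \<theta> X \<in> hom D (fo F X) (fo G X)) \<and>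
     (\<forall>f\<in>Ar C. Cmp D (\<theta> (Cod C f)) (fa F f) = Cmp D (fa G f) (\<theta> (Dom C f)))"

definition comonad :: "('o,'a) cat \<Rightarrow> ('o,'a,'o,'a) ftr \<Rightarrow> ('o \<Rightarrow> 'a) \<Rightarrow> ('o \<Rightarrow> 'a) \<Rightarrow> bool" where
  "comonad C K \<mu> \<nu> \<longleftrightarrow> is_functor C C K \<and>
     nat_trans C C K (ftr_comp K K) \<mu> \<and> nat_trans C C K ftr_id \<nu> \<and>
     (\<forall>X\<in>Ob C. Cmp C (\<nu> (fo K X)) (\<mu> X) = Idt C (fo K X)) \<and>
     (\<forall>X\<in>Ob C. Cmp C (fa K (\<nu> X)) (\<mu> X) = Idt C (fo K X)) \<and>
     (\<forall>X\<in>Ob C. Cmp C (\<mu> (fo K X)) (\<mu> X) = Cmp C (fa K (\<mu> X)) (\<mu> X))"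

text \<open>A doctrine \<open>P : C^op \<rightarrow> Pos\<close>: base category, fibre posets (carrier + order),
  reindexing \<open>Rx t : P Y \<rightarrow> P X\<close> for \<open>t : X \<rightarrow> Y\<close>.\<close>

record ('o,'a,'p) doct =
  Base :: "('o,'a) cat"
  Fib  :: "'o \<Rightarrow> 'p set"
  Le   :: "'o \<Rightarrow> 'p \<Rightarrow> 'p \<Rightarrow> bool"
  Rx   :: "'a \<Rightarrow> 'p \<Rightarrow> 'p"

definition doctrine :: "('o,'a,'p) doct \<Rightarrow> bool" where
  "doctrine P \<longleftrightarrow> category (Base P) \<and>
     (\<forall>X\<in>Ob (Base P).
        (\<forall>a\<in>Fib P X. Le P X a a) \<and>
        (\<forall>a\<in>Fib P X. \<forall>b\<in>Fib P X. Le P X a b \<longrightarrow> Le P X b a \<longrightarrow> a = b) \<and>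
        (\<forall>a\<in>Fib P X. \<forall>b\<in>Fib P X. \<forall>c\<in>Fib P X. Le P X a b \<longrightarrow> Le P X b c \<longrightarrow> Le P X a c)) \<and>
     (\<forall>t\<in>Ar (Base P). \<forall>a\<in>Fib P (Cod (Base P) t). Rx P t a \<in> Fib P (Dom (Base P) t)) \<and>
     (\<forall>t\<in>Ar (Base P). \<forall>a\<in>Fib P (Cod (Base P) t). \<forall>b\<in>Fib P (Cod (Base P) t).
        Le P (Cod (Base P) t) a b \<longrightarrow> Le P (Dom (Base P) t) (Rx P t a) (Rx P t b)) \<and>
     (\<forall>X\<in>Ob (Base P). \<forall>a\<in>Fib P X. Rx P (Idt (Base P) X) a = a) \<and>
     (\<forall>f\<in>Ar (Base P). \<forall>g\<in>Ar (Base P). Cod (Base P) f = Dom (Base P) g \<longrightarrow>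
        (\<forall>a\<in>Fib P (Cod (Base P) g). Rx P (Cmp (Base P) g f) a = Rx P f (Rx P g a)))"

text \<open>1-arrows \<open>(F,f) : P \<rightarrow> Q\<close>: a functor and a natural transformation
  \<open>f : P \<Rightarrow> Q \<circ> F^op\<close> with monotone components.\<close>

type_synonym ('o,'a,'p,'o2,'a2,'q) arr1 = "('o,'a,'o2,'a2) ftr \<times> ('o \<Rightarrow> 'p \<Rightarrow> 'q)"

definition one_arrow :: "('o,'a,'p) doct \<Rightarrow> ('o2,'a2,'q) doct \<Rightarrow> ('o,'a,'p,'o2,'a2,'q) arr1 \<Rightarrow> bool" where
  "one_arrow P Q A \<longleftrightarrow> doctrine P \<and> doctrine Q \<and>
     is_functor (Base P) (Base Q) (fst A) \<and>
     (\<forall>X\<in>Ob (Base P). \<forall>a\<in>Fib P X. snd A X a \<in> Fib Q (fo (fst A) X)) \<and>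
     (\<forall>X\<in>Ob (Base P). \<forall>a\<in>Fib P X. \<forall>b\<in>Fib P X. Le P X a b \<longrightarrow>
        Le Q (fo (fst A) X) (snd A X a) (snd A X b)) \<and>
     (\<forall>t\<in>Ar (Base P). \<forall>a\<in>Fib P (Cod (Base P) t).
        snd A (Dom (Base P) t) (Rx P t a) = Rx Q (fa (fst A) t) (snd A (Cod (Base P) t) a))"

definition two_arrow :: "('o,'a,'p) doct \<Rightarrow> ('o2,'a2,'q) doct \<Rightarrow> ('o,'a,'p,'o2,'a2,'q) arr1
     \<Rightarrow> ('o,'a,'p,'o2,'a2,'q) arr1 \<Rightarrow> ('o \<Rightarrow> 'a2) \<Rightarrow> bool" where
  "two_arrow P Q A B \<theta> \<longleftrightarrow> one_arrow P Q A \<and> one_arrow P Q B \<and>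
     nat_trans (Base P) (Base Q) (fst A) (fst B) \<theta> \<and>
     (\<forall>X\<in>Ob (Base P). \<forall>a\<in>Fib P X.
        Le Q (fo (fst A) X) (snd A X a) (Rx Q (\<theta> X) (snd B X a)))"

definition arr1_id :: "('o,'a,'p,'o,'a,'p) arr1" where
  "arr1_id = (ftr_id, \<lambda>X a. a)"

text \<open>\<open>arr1_comp B A\<close>: first \<open>A = (G,g)\<close>, then \<open>B = (F,f)\<close>; result \<open>(FG, f_{G-} \<circ> g)\<close>.\<close>

definition arr1_comp :: "('o2,'a2,'q,'o3,'a3,'r) arr1 \<Rightarrow> ('o,'a,'p,'o2,'a2,'q) arr1
     \<Rightarrow> ('o,'a,'p,'o3,'a3,'r) arr1" where
  "arr1_comp B A = (ftr_comp (fst B) (fst A), \<lambda>X a. snd B (fo (fst A) X) (snd A X a))"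

text \<open>Adjunction \<open>L \<stileturn> R\<close> in IdxPos, \<open>L : P \<rightarrow> Q\<close>, \<open>R : Q \<rightarrow> P\<close>, with unit
  \<open>\<eta> : id \<Rightarrow> R L\<close> and counit \<open>\<epsilon> : L R \<Rightarrow> id\<close> and the triangle identities
  (vertical composition of 2-arrows is componentwise composition).\<close>

definition adjunction :: "('o,'a,'p) doct \<Rightarrow> ('o2,'a2,'q) doct \<Rightarrow> ('o,'a,'p,'o2,'a2,'q) arr1
     \<Rightarrow> ('o2,'a2,'q,'o,'a,'p) arr1 \<Rightarrow> ('o \<Rightarrow> 'a) \<Rightarrow> ('o2 \<Rightarrow> 'a2) \<Rightarrow> bool" where
  "adjunction P Q L R \<eta> \<epsilon> \<longleftrightarrow> one_arrow P Q L \<and> one_arrow Q P R \<and>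
     two_arrow P P arr1_id (arr1_comp R L) \<eta> \<and>
     two_arrow Q Q (arr1_comp L R) arr1_id \<epsilon> \<and>
     (\<forall>X\<in>Ob (Base P). Cmp (Base Q) (\<epsilon> (fo (fst L) X)) (fa (fst L) (\<eta> X)) = Idt (Base Q) (fo (fst L) X)) \<and>
     (\<forall>Y\<in>Ob (Base Q). Cmp (Base P) (fa (fst R) (\<epsilon> Y)) (\<eta> (fo (fst R) Y)) = Idt (Base P) (fo (fst R) Y))"

definition doct_comonad :: "('o,'a,'p) doct \<Rightarrow> ('o,'a,'o,'a) ftr \<Rightarrow> ('o \<Rightarrow> 'p \<Rightarrow> 'p)
     \<Rightarrow> ('o \<Rightarrow> 'a) \<Rightarrow> ('o \<Rightarrow> 'a) \<Rightarrow> bool" where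
  "doct_comonad P K \<kappa> \<mu> \<nu> \<longleftrightarrow> comonad (Base P) K \<mu> \<nu> \<and> one_arrow P P (K, \<kappa>) \<and>
     (\<forall>X\<in>Ob (Base P). \<forall>a\<in>Fib P X.
        Le P (fo K X) (\<kappa> X a) (Rx P (\<mu> X) (\<kappa> (fo K X) (\<kappa> X a))) \<and>
        Le P (fo K X) (\<kappa> X a) (Rx P (\<nu> X) a))"

text \<open>Objects of \<open>C_K\<close>: coalgebras \<open>(C,c)\<close>. Arrows: triples (source, target, underlying arrow).\<close>

definition coalg_ob :: "('o,'a) cat \<Rightarrow> ('o,'a,'o,'a) ftr \<Rightarrow> ('o \<Rightarrow> 'a) \<Rightarrow> ('o \<Rightarrow> 'a) \<Rightarrow> ('o \<times> 'a) set" where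
  "coalg_ob C K \<mu> \<nu> = {(X, c). X \<in> Ob C \<and> c \<in> hom C X (fo K X) \<and>
      Cmp C (\<nu> X) c = Idt C X \<and> Cmp C (\<mu> X) c = Cmp C (fa K c) c}"

definition coalg_cat :: "('o,'a) cat \<Rightarrow> ('o,'a,'o,'a) ftr \<Rightarrow> ('o \<Rightarrow> 'a) \<Rightarrow> ('o \<Rightarrow> 'a)
     \<Rightarrow> ('o \<times> 'a, ('o \<times> 'a) \<times> ('o \<times> 'a) \<times> 'a) cat" where
  "coalg_cat C K \<mu> \<nu> = \<lparr>
     Ob = coalg_ob C K \<mu> \<nu>,
     Ar = {(A, B, f). A \<in> coalg_ob C K \<mu> \<nu> \<and> B \<in> coalg_ob C K \<mu> \<nu> \<and>
             f \<in> hom C (fst A) (fst B) \<and> Cmp C (snd B) f = Cmp C (fa K f) (snd A)},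
     Dom = (\<lambda>h. fst h),
     Cod = (\<lambda>h. fst (snd h)),
     Idt = (\<lambda>A. (A, A, Idt C (fst A))),
     Cmp = (\<lambda>g f. (fst f, fst (snd g), Cmp C (snd (snd g)) (snd (snd f)))) \<rparr>"

definition coalg_doct :: "('o,'a,'p) doct \<Rightarrow> ('o,'a,'o,'a) ftr \<Rightarrow> ('o \<Rightarrow> 'p \<Rightarrow> 'p)
     \<Rightarrow> ('o \<Rightarrow> 'a) \<Rightarrow> ('o \<Rightarrow> 'a) \<Rightarrow> ('o \<times> 'a, ('o \<times> 'a) \<times> ('o \<times> 'a) \<times> 'a, 'p) doct" where
  "coalg_doct P K \<kappa> \<mu> \<nu> = \<lparr>
     Base = coalg_cat (Base P) K \<mu> \<nu>,
     Fib = (\<lambda>(C, c). {a \<in> Fib P C. Le P C a (Rx P c (\<kappa> C a))}),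
     Le = (\<lambda>A. Le P (fst A)),
     Rx = (\<lambda>h. Rx P (snd (snd h))) \<rparr>"

definition forget_arr :: "(('o \<times> 'a), ('o \<times> 'a) \<times> ('o \<times> 'a) \<times> 'a, 'p, 'o, 'a, 'p) arr1" where
  "forget_arr = ((\<lambda>A. fst A, \<lambda>h. snd (snd h)), \<lambda>A a. a)"

definition cofree :: "('o,'a) cat \<Rightarrow> ('o,'a,'o,'a) ftr \<Rightarrow> ('o \<Rightarrow> 'a)
     \<Rightarrow> ('o, 'a, 'o \<times> 'a, ('o \<times> 'a) \<times> ('o \<times> 'a) \<times> 'a) ftr" where
  "cofree C K \<mu> = (\<lambda>X. (fo K X, \<mu> X),
      \<lambda>f. ((fo K (Dom C f), \<mu> (Dom C f)), (fo K (Cod C f), \<mu> (Cod C f)), fa K f))"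

definition coalg_unit :: "('o,'a,'o,'a) ftr \<Rightarrow> ('o \<Rightarrow> 'a) \<Rightarrow> ('o \<times> 'a) \<Rightarrow> ('o \<times> 'a) \<times> ('o \<times> 'a) \<times> 'a" where
  "coalg_unit K \<mu> A = (A, (fo K (fst A), \<mu> (fst A)), snd A)"

end

theory Submission
  imports Defs
begin

(* On base categories, the forgetful functor from K-coalgebras is left adjoint to the cofree
   functor X |-> (KX, mu_X), with unit the structure maps c and counit nu; the two triangle
   identities are the counit law nu_C o c = id of a coalgebra and the comonad law
   K(nu) o mu = id. Lifting this to doctrines costs one inequality per 2-cell: kappa lands in
   P^K because kappa <= P(mu) kappa kappa, nu is a 2-arrow because kappa <= P(nu), and the unit
   c : (C,c) -> (KC, mu_C) is a 2-arrow precisely because P^K(C,c) consists of the alpha with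
   alpha <= P(c)(kappa_C alpha). The only other point is that P^K is a doctrine at all, i.e.
   that reindexing along a coalgebra morphism preserves this inequality, which follows from
   the naturality of kappa. *)

section \<open>Categories, functors and 1-arrows\<close>

lemma categoryD:
  assumes "category C"
  shows category_dom_ob: "f \<in> Ar C \<Longrightarrow> Dom C f \<in> Ob C"
    and category_cod_ob: "f \<in> Ar C \<Longrightarrow> Cod C f \<in> Ob C"
    and category_idt: "X \<in> Ob C \<Longrightarrow> Idt C X \<in> Ar C \<and> Dom C (Idt C X) = X \<and> Cod C (Idt C X) = X"
    and category_cmp: "\<lbrakk>f \<in> Ar C; g \<in> Ar C; Cod C f = Dom C g\<rbrakk> \<Longrightarrow>
      Cmp C g f \<in> Ar C \<and> Dom C (Cmp C g f) = Dom C f \<and> Cod C (Cmp C g f) = Cod C g"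
    and category_idt_left: "f \<in> Ar C \<Longrightarrow> Cmp C (Idt C (Cod C f)) f = f"
    and category_idt_right: "f \<in> Ar C \<Longrightarrow> Cmp C f (Idt C (Dom C f)) = f"
    and category_assoc: "\<lbrakk>f \<in> Ar C; g \<in> Ar C; h \<in> Ar C; Cod C f = Dom C g; Cod C g = Dom C h\<rbrakk>
      \<Longrightarrow>
      Cmp C h (Cmp C g f) = Cmp C (Cmp C h g) f"
  using assms unfolding category_def by (auto simp: hom_def)

lemma is_functorD:
  assumes "is_functor C D F"
  shows is_functor_ob: "X \<in> Ob C \<Longrightarrow> fo F X \<in> Ob D"
    and is_functor_arr: "f \<in> Ar C \<Longrightarrow>
      fa F f \<in> Ar D \<and> Dom D (fa F f) = fo F (Dom C f) \<and> Cod D (fa F f) = fo F (Cod C f)"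
    and is_functor_idt: "X \<in> Ob C \<Longrightarrow> fa F (Idt C X) = Idt D (fo F X)"
    and is_functor_cmp: "\<lbrakk>f \<in> Ar C; g \<in> Ar C; Cod C f = Dom C g\<rbrakk> \<Longrightarrow>
      fa F (Cmp C g f) = Cmp D (fa F g) (fa F f)"
  using assms unfolding is_functor_def by (auto simp: hom_def)

lemma is_functor_ftr_id: "category C \<Longrightarrow> is_functor C C ftr_id"
  unfolding is_functor_def ftr_id_def category_def by (auto simp: hom_def)

lemma is_functor_ftr_comp:
  assumes F: "is_functor C D F" and G: "is_functor D E G"
  shows "is_functor C E (ftr_comp G F)"
  unfolding is_functor_def ftr_comp_def fst_conv snd_conv
proof (intro conjI ballI impI)
  show "category C" "category E" using F G by (simp_all add: is_functor_def)
next
  fix X assume "X \<in> Ob C"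
  then show "fo G (fo F X) \<in> Ob E" by (intro is_functor_ob[OF G] is_functor_ob[OF F])
next
  fix f assume "f \<in> Ar C"
  then show "fa G (fa F f) \<in> hom E (fo G (fo F (Dom C f))) (fo G (fo F (Cod C f)))"
    using is_functor_arr[OF F] is_functor_arr[OF G] by (simp add: hom_def)
next
  fix X assume "X \<in> Ob C"
  then show "fa G (fa F (Idt C X)) = Idt E (fo G (fo F X))"
    by (simp add: is_functor_idt[OF F] is_functor_idt[OF G] is_functor_ob[OF F])
next
  fix f g assume "f \<in> Ar C" "g \<in> Ar C" "Cod C f = Dom C g"
  then show "fa G (fa F (Cmp C g f)) = Cmp E (fa G (fa F g)) (fa G (fa F f))"
    using is_functor_arr[OF F] by (simp add: is_functor_cmp[OF F] is_functor_cmp[OF G])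
qed

lemma doctrineD:
  assumes "doctrine P"
  shows doctrine_category: "category (Base P)"
    and doctrine_Le_refl: "\<lbrakk>X \<in> Ob (Base P); a \<in> Fib P X\<rbrakk> \<Longrightarrow> Le P X a a"
    and doctrine_Le_antisym: "\<lbrakk>X \<in> Ob (Base P); a \<in> Fib P X; b \<in> Fib P X; Le P X a b; Le P X b a\<rbrakk>
      \<Longrightarrow> a = b"
    and doctrine_Le_trans: "\<lbrakk>X \<in> Ob (Base P); a \<in> Fib P X; b \<in> Fib P X; c \<in> Fib P X;
      Le P X a b; Le P X b c\<rbrakk> \<Longrightarrow> Le P X a c"
    and doctrine_Rx_fib: "\<lbrakk>t \<in> Ar (Base P); a \<in> Fib P (Cod (Base P) t)\<rbrakk>
      \<Longrightarrow> Rx P t a \<in> Fib P (Dom (Base P) t)"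
    and doctrine_Rx_mono: "\<lbrakk>t \<in> Ar (Base P); a \<in> Fib P (Cod (Base P) t); b \<in> Fib P (Cod (Base P) t);
      Le P (Cod (Base P) t) a b\<rbrakk> \<Longrightarrow> Le P (Dom (Base P) t) (Rx P t a) (Rx P t b)"
    and doctrine_Rx_idt: "\<lbrakk>X \<in> Ob (Base P); a \<in> Fib P X\<rbrakk> \<Longrightarrow> Rx P (Idt (Base P) X) a = a"
    and doctrine_Rx_cmp: "\<lbrakk>f \<in> Ar (Base P); g \<in> Ar (Base P); Cod (Base P) f = Dom (Base P) g;
      a \<in> Fib P (Cod (Base P) g)\<rbrakk> \<Longrightarrow> Rx P (Cmp (Base P) g f) a = Rx P f (Rx P g a)"
  using assms unfolding doctrine_def by meson+

lemma one_arrowD: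
  assumes "one_arrow P Q A"
  shows one_arrow_dom: "doctrine P"
    and one_arrow_cod: "doctrine Q"
    and one_arrow_functor: "is_functor (Base P) (Base Q) (fst A)"
    and one_arrow_fib: "\<lbrakk>X \<in> Ob (Base P); a \<in> Fib P X\<rbrakk> \<Longrightarrow> snd A X a \<in> Fib Q (fo (fst A) X)"
    and one_arrow_mono: "\<lbrakk>X \<in> Ob (Base P); a \<in> Fib P X; b \<in> Fib P X; Le P X a b\<rbrakk>
      \<Longrightarrow> Le Q (fo (fst A) X) (snd A X a) (snd A X b)"
    and one_arrow_natural: "\<lbrakk>t \<in> Ar (Base P); a \<in> Fib P (Cod (Base P) t)\<rbrakk>
      \<Longrightarrow> snd A (Dom (Base P) t) (Rx P t a) = Rx Q (fa (fst A) t) (snd A (Cod (Base P) t) a)"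
  using assms unfolding one_arrow_def by meson+

lemma one_arrow_arr1_id: "doctrine P \<Longrightarrow> one_arrow P P arr1_id"
  unfolding one_arrow_def arr1_id_def
  by (simp add: ftr_id_def is_functor_ftr_id[OF doctrine_category, unfolded ftr_id_def])

lemma one_arrow_arr1_comp:
  assumes A: "one_arrow P Q A" and B: "one_arrow Q R B"
  shows "one_arrow P R (arr1_comp B A)"
  unfolding one_arrow_def arr1_comp_def fst_conv snd_conv
proof (intro conjI ballI impI)
  show "doctrine P" "doctrine R" using one_arrow_dom[OF A] one_arrow_cod[OF B] .
  show "is_functor (Base P) (Base R) (ftr_comp (fst B) (fst A))"
    using one_arrow_functor[OF A] one_arrow_functor[OF B] by (rule is_functor_ftr_comp)
next
  fix X a assume X: "X \<in> Ob (Base P)" and a: "a \<in> Fib P X"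
  have "fo (fst A) X \<in> Ob (Base Q)" "snd A X a \<in> Fib Q (fo (fst A) X)"
    using is_functor_ob[OF one_arrow_functor[OF A] X] one_arrow_fib[OF A X a] .
  then show "snd B (fo (fst A) X) (snd A X a) \<in> Fib R (fo (ftr_comp (fst B) (fst A)) X)"
    unfolding ftr_comp_def fst_conv by (rule one_arrow_fib[OF B])
next
  fix X a b assume X: "X \<in> Ob (Base P)" and a: "a \<in> Fib P X" and b: "b \<in> Fib P X"
    and "Le P X a b"
  then have "Le Q (fo (fst A) X) (snd A X a) (snd A X b)" by (rule one_arrow_mono[OF A])
  then show "Le R (fo (ftr_comp (fst B) (fst A)) X)
      (snd B (fo (fst A) X) (snd A X a)) (snd B (fo (fst A) X) (snd A X b))"
    unfolding ftr_comp_def fst_conv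
    using is_functor_ob[OF one_arrow_functor[OF A] X] one_arrow_fib[OF A X] a b
    by (intro one_arrow_mono[OF B])
next
  fix t a assume t: "t \<in> Ar (Base P)" and a: "a \<in> Fib P (Cod (Base P) t)"
  have At: "fa (fst A) t \<in> Ar (Base Q)" "Dom (Base Q) (fa (fst A) t) = fo (fst A) (Dom (Base P) t)"
    "Cod (Base Q) (fa (fst A) t) = fo (fst A) (Cod (Base P) t)"
    using is_functor_arr[OF one_arrow_functor[OF A] t] by simp_all
  have "snd A (Cod (Base P) t) a \<in> Fib Q (Cod (Base Q) (fa (fst A) t))"
    using one_arrow_fib[OF A] category_cod_ob[OF doctrine_category[OF one_arrow_dom[OF A]] t] a At
    by simp
  then have "snd B (Dom (Base Q) (fa (fst A) t)) (Rx Q (fa (fst A) t) (snd A (Cod (Base P) t) a)) =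
      Rx R (fa (fst B) (fa (fst A) t)) (snd B (Cod (Base Q) (fa (fst A) t)) (snd A (Cod (Base P) t) a))"
    by (rule one_arrow_natural[OF B At(1)])
  then show "snd B (fo (fst A) (Dom (Base P) t)) (snd A (Dom (Base P) t) (Rx P t a)) =
      Rx R (fa (ftr_comp (fst B) (fst A)) t) (snd B (fo (fst A) (Cod (Base P) t)) (snd A (Cod (Base P) t) a))"
    by (simp only: At(2,3) one_arrow_natural[OF A t a] ftr_comp_def snd_conv)
qed

section \<open>Coalgebras of an endofunctor\<close>

lemma mem_coalg_ob_iff:
  "(X, c) \<in> coalg_ob C K \<mu> \<nu> \<longleftrightarrow> X \<in> Ob C \<and> c \<in> Ar C \<and> Dom C c = X \<and> Cod C c = fo K X \<and>
     Cmp C (\<nu> X) c = Idt C X \<and> Cmp C (\<mu> X) c = Cmp C (fa K c) c"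
  by (simp add: coalg_ob_def hom_def)

lemma coalg_ob_fst: "A \<in> coalg_ob C K \<mu> \<nu> \<Longrightarrow> fst A \<in> Ob C"
  by (cases A) (simp add: mem_coalg_ob_iff)

lemma coalg_cat_simps [simp]:
  "Ob (coalg_cat C K \<mu> \<nu>) = coalg_ob C K \<mu> \<nu>"
  "Dom (coalg_cat C K \<mu> \<nu>) h = fst h"
  "Cod (coalg_cat C K \<mu> \<nu>) h = fst (snd h)"
  "Idt (coalg_cat C K \<mu> \<nu>) A = (A, A, Idt C (fst A))"
  "Cmp (coalg_cat C K \<mu> \<nu>) g h = (fst h, fst (snd g), Cmp C (snd (snd g)) (snd (snd h)))"
  by (simp_all add: coalg_cat_def)

lemma mem_coalg_arr_iff:
  "(A, B, f) \<in> Ar (coalg_cat C K \<mu> \<nu>) \<longleftrightarrow> A \<in> coalg_ob C K \<mu> \<nu> \<and> B \<in> coalg_ob C K \<mu> \<nu> \<and>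
     f \<in> Ar C \<and> Dom C f = fst A \<and> Cod C f = fst B \<and> Cmp C (snd B) f = Cmp C (fa K f) (snd A)"
  by (simp add: coalg_cat_def hom_def)

locale endofunctor =
  fixes C :: "('o,'a) cat" and K :: "('o,'a,'o,'a) ftr"
  assumes is_functor: "is_functor C C K"
begin

lemma category: "category C"
  using is_functor by (simp add: is_functor_def)

lemmas dom_ob = category_dom_ob[OF category]
  and cod_ob = category_cod_ob[OF category]
  and idt = category_idt[OF category]
  and cmp = category_cmp[OF category]
  and idt_left = category_idt_left[OF category]
  and idt_right = category_idt_right[OF category]
  and assoc = category_assoc[OF category]
  and K_ob = is_functor_ob[OF is_functor]
  and K_arr = is_functor_arr[OF is_functor]
  and K_idt = is_functor_idt[OF is_functor]
  and K_cmp = is_functor_cmp[OF is_functor]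

lemma coalg_morphism_idt:
  assumes "c \<in> Ar C" "Dom C c = X" "Cod C c = fo K X"
  shows "Cmp C c (Idt C X) = Cmp C (fa K (Idt C X)) c"
  using assms idt_left[of c] idt_right[of c] K_idt dom_ob by metis

lemma coalg_morphism_cmp:
  assumes f: "f \<in> Ar C" "Dom C f = X" "Cod C f = Y"
    and k: "k \<in> Ar C" "Dom C k = Y" "Cod C k = Z"
    and a: "a \<in> Ar C" "Dom C a = X" "Cod C a = fo K X"
    and b: "b \<in> Ar C" "Dom C b = Y" "Cod C b = fo K Y"
    and d: "d \<in> Ar C" "Dom C d = Z"
    and f_hom: "Cmp C b f = Cmp C (fa K f) a"
    and k_hom: "Cmp C d k = Cmp C (fa K k) b"
  shows "Cmp C d (Cmp C k f) = Cmp C (fa K (Cmp C k f)) a"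
proof -
  have Kf: "fa K f \<in> Ar C" "Dom C (fa K f) = fo K X" "Cod C (fa K f) = fo K Y"
    and Kk: "fa K k \<in> Ar C" "Dom C (fa K k) = fo K Y" "Cod C (fa K k) = fo K Z"
    using K_arr f k by auto
  have "Cmp C d (Cmp C k f) = Cmp C (Cmp C d k) f" using assoc[of f k d] f k d by simp
  also have "\<dots> = Cmp C (fa K k) (Cmp C b f)" using assoc[of f b "fa K k"] f b Kk k_hom by simp
  also have "\<dots> = Cmp C (Cmp C (fa K k) (fa K f)) a" using assoc[of a "fa K f" "fa K k"] a Kf Kk f_hom by simp
  also have "\<dots> = Cmp C (fa K (Cmp C k f)) a" using K_cmp f k by simp
  finally show ?thesis .
qed

lemma category_coalg_cat: "category (coalg_cat C K \<mu> \<nu>)" (is "category ?CK")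
  unfolding category_def
proof (intro conjI ballI impI)
  fix h assume "h \<in> Ar ?CK"
  then show "Dom ?CK h \<in> Ob ?CK" "Cod ?CK h \<in> Ob ?CK"
    by (cases h; auto simp: mem_coalg_arr_iff)+
next
  fix A assume A: "A \<in> Ob ?CK"
  then obtain X c where "A = (X, c)" "X \<in> Ob C" "c \<in> Ar C" "Dom C c = X" "Cod C c = fo K X"
    by (cases A) (auto simp: mem_coalg_ob_iff)
  then show "Idt ?CK A \<in> hom ?CK A A"
    using A idt coalg_morphism_idt by (simp add: hom_def mem_coalg_arr_iff)
next
  fix h g assume h: "h \<in> Ar ?CK" and g: "g \<in> Ar ?CK" and hg: "Cod ?CK h = Dom ?CK g"
  obtain X a Y b f Z d k where he: "h = ((X, a), (Y, b), f)" and ge: "g = ((Y, b), (Z, d), k)"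
    using hg by (cases h, cases g) auto
  from h g have "(X, a) \<in> coalg_ob C K \<mu> \<nu>" "(Y, b) \<in> coalg_ob C K \<mu> \<nu>" "(Z, d) \<in> coalg_ob C K \<mu> \<nu>"
    "f \<in> Ar C" "Dom C f = X" "Cod C f = Y" "Cmp C b f = Cmp C (fa K f) a"
    "k \<in> Ar C" "Dom C k = Y" "Cod C k = Z" "Cmp C d k = Cmp C (fa K k) b"
    by (simp_all add: he ge mem_coalg_arr_iff)
  then show "Cmp ?CK g h \<in> hom ?CK (Dom ?CK h) (Cod ?CK g)"
    using coalg_morphism_cmp[of f X Y k Z a b d] cmp[of f k]
    by (simp add: he ge hom_def mem_coalg_arr_iff mem_coalg_ob_iff)
next
  fix h assume "h \<in> Ar ?CK"
  then show "Cmp ?CK (Idt ?CK (Cod ?CK h)) h = h" "Cmp ?CK h (Idt ?CK (Dom ?CK h)) = h"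
    using idt_left idt_right by (cases h; auto simp: mem_coalg_arr_iff)+
next
  fix h g k assume "h \<in> Ar ?CK" "g \<in> Ar ?CK" "k \<in> Ar ?CK" "Cod ?CK h = Dom ?CK g" "Cod ?CK g = Dom ?CK k"
  then show "Cmp ?CK k (Cmp ?CK g h) = Cmp ?CK (Cmp ?CK k g) h"
    using assoc by (cases h, cases g, cases k) (auto simp: mem_coalg_arr_iff)
qed

lemma is_functor_forget: "is_functor (coalg_cat C K \<mu> \<nu>) C (fst forget_arr)" (is "is_functor ?CK _ _")
  unfolding is_functor_def forget_arr_def fst_conv snd_conv
proof (intro conjI ballI impI)
  show "category ?CK" "category C" by (fact category_coalg_cat category)+
next
  fix A assume "A \<in> Ob ?CK"
  then show "fst A \<in> Ob C" by (simp add: coalg_ob_fst)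
next
  fix h assume "h \<in> Ar ?CK"
  then show "snd (snd h) \<in> hom C (fst (Dom ?CK h)) (fst (Cod ?CK h))"
    by (cases h) (simp add: hom_def mem_coalg_arr_iff)
qed simp_all

end

locale cat_comonad = endofunctor +
  fixes \<mu> \<nu>
  assumes comonad: "comonad C K \<mu> \<nu>"
begin

abbreviation "CK \<equiv> coalg_cat C K \<mu> \<nu>"
abbreviation "Khat \<equiv> cofree C K \<mu>"

lemma nat_trans_mu: "nat_trans C C K (ftr_comp K K) \<mu>"
  and nat_trans_nu: "nat_trans C C K ftr_id \<nu>"
  and counit_left: "X \<in> Ob C \<Longrightarrow> Cmp C (\<nu> (fo K X)) (\<mu> X) = Idt C (fo K X)"
  and counit_right: "X \<in> Ob C \<Longrightarrow> Cmp C (fa K (\<nu> X)) (\<mu> X) = Idt C (fo K X)"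
  and coassoc: "X \<in> Ob C \<Longrightarrow> Cmp C (\<mu> (fo K X)) (\<mu> X) = Cmp C (fa K (\<mu> X)) (\<mu> X)"
  using comonad unfolding comonad_def by blast+

lemma mu_arr: "X \<in> Ob C \<Longrightarrow> \<mu> X \<in> Ar C \<and> Dom C (\<mu> X) = fo K X \<and> Cod C (\<mu> X) = fo K (fo K X)"
  and mu_natural: "f \<in> Ar C \<Longrightarrow> Cmp C (\<mu> (Cod C f)) (fa K f) = Cmp C (fa K (fa K f)) (\<mu> (Dom C f))"
  and nu_arr: "X \<in> Ob C \<Longrightarrow> \<nu> X \<in> Ar C \<and> Dom C (\<nu> X) = fo K X \<and> Cod C (\<nu> X) = X"
  using nat_trans_mu nat_trans_nu unfolding nat_trans_def hom_def ftr_comp_def ftr_id_def by simp_all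

lemma cofree_coalg_ob: "X \<in> Ob C \<Longrightarrow> fo Khat X \<in> Ob CK"
  using K_ob mu_arr counit_left coassoc by (simp add: cofree_def mem_coalg_ob_iff)

lemma is_functor_cofree: "is_functor C CK Khat"
  unfolding is_functor_def
proof (intro conjI ballI impI)
  show "category C" "category CK" by (fact category category_coalg_cat)+
next
  fix f assume "f \<in> Ar C"
  then show "fa Khat f \<in> hom CK (fo Khat (Dom C f)) (fo Khat (Cod C f))"
    using K_arr mu_natural cofree_coalg_ob dom_ob cod_ob
    by (simp add: hom_def cofree_def mem_coalg_arr_iff)
next
  fix X assume "X \<in> Ob C"
  then show "fa Khat (Idt C X) = Idt CK (fo Khat X)"
    using idt K_idt by (simp add: cofree_def)
next
  fix f g assume "f \<in> Ar C" "g \<in> Ar C" "Cod C f = Dom C g"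
  then show "fa Khat (Cmp C g f) = Cmp CK (fa Khat g) (fa Khat f)"
    using cmp K_cmp by (simp add: cofree_def)
qed (rule cofree_coalg_ob)

lemma nat_trans_coalg_unit: "nat_trans CK CK ftr_id (ftr_comp Khat (fst forget_arr)) (coalg_unit K \<mu>)"
  unfolding nat_trans_def
proof (intro conjI ballI)
  show "is_functor CK CK ftr_id" by (rule is_functor_ftr_id[OF category_coalg_cat])
  show "is_functor CK CK (ftr_comp Khat (fst forget_arr))"
    by (rule is_functor_ftr_comp[OF is_functor_forget is_functor_cofree])
next
  fix A assume A: "A \<in> Ob CK"
  then obtain X c where "A = (X, c)" "X \<in> Ob C" by (cases A) (auto simp: mem_coalg_ob_iff)
  then show "coalg_unit K \<mu> A \<in> hom CK (fo ftr_id A) (fo (ftr_comp Khat (fst forget_arr)) A)"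
    using A cofree_coalg_ob[of X]
    by (simp add: hom_def coalg_unit_def ftr_id_def ftr_comp_def forget_arr_def cofree_def
        mem_coalg_arr_iff mem_coalg_ob_iff)
next
  fix h assume "h \<in> Ar CK"
  then show "Cmp CK (coalg_unit K \<mu> (Cod CK h)) (fa ftr_id h) =
      Cmp CK (fa (ftr_comp Khat (fst forget_arr)) h) (coalg_unit K \<mu> (Dom CK h))"
    by (cases h) (simp add: coalg_unit_def ftr_id_def ftr_comp_def forget_arr_def cofree_def
        mem_coalg_arr_iff)
qed

lemma triangle_forget:
  "A \<in> Ob CK \<Longrightarrow>
    Cmp C (\<nu> (fo (fst forget_arr) A)) (fa (fst forget_arr) (coalg_unit K \<mu> A)) = Idt C (fo (fst forget_arr) A)"
  by (cases A) (simp add: forget_arr_def coalg_unit_def mem_coalg_ob_iff)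

lemma triangle_cofree:
  "X \<in> Ob C \<Longrightarrow> Cmp CK (fa Khat (\<nu> X)) (coalg_unit K \<mu> (fo Khat X)) = Idt CK (fo Khat X)"
  using nu_arr counit_right by (simp add: cofree_def coalg_unit_def)

end

section \<open>The doctrine of coalgebras\<close>

lemma coalg_doct_simps [simp]:
  "Base (coalg_doct P K \<kappa> \<mu> \<nu>) = coalg_cat (Base P) K \<mu> \<nu>"
  "Le (coalg_doct P K \<kappa> \<mu> \<nu>) A = Le P (fst A)"
  "Rx (coalg_doct P K \<kappa> \<mu> \<nu>) h = Rx P (snd (snd h))"
  by (simp_all add: coalg_doct_def)

lemma mem_coalg_doct_Fib_iff:
  "a \<in> Fib (coalg_doct P K \<kappa> \<mu> \<nu>) A \<longleftrightarrow>
     a \<in> Fib P (fst A) \<and> Le P (fst A) a (Rx P (snd A) (\<kappa> (fst A) a))"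
  by (cases A) (simp add: coalg_doct_def)

locale doctrine_endo_arrow =
  fixes P :: "('o,'a,'p) doct" and K :: "('o,'a,'o,'a) ftr" and \<kappa> :: "'o \<Rightarrow> 'p \<Rightarrow> 'p"
  assumes one_arrow: "one_arrow P P (K, \<kappa>)"
begin

sublocale endofunctor "Base P" K
  using one_arrow_functor[OF one_arrow] by unfold_locales simp

lemma doctrine: "doctrine P"
  by (rule one_arrow_dom[OF one_arrow])

lemmas Le_refl = doctrine_Le_refl[OF doctrine]
  and Le_antisym = doctrine_Le_antisym[OF doctrine]
  and Le_trans = doctrine_Le_trans[OF doctrine]
  and Rx_fib = doctrine_Rx_fib[OF doctrine]
  and Rx_mono = doctrine_Rx_mono[OF doctrine]
  and Rx_idt = doctrine_Rx_idt[OF doctrine]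
  and Rx_cmp = doctrine_Rx_cmp[OF doctrine]
  and \<kappa>_fib = one_arrow_fib[OF one_arrow, simplified]
  and \<kappa>_mono = one_arrow_mono[OF one_arrow, simplified]
  and \<kappa>_natural = one_arrow_natural[OF one_arrow, simplified]

lemma Rx_coalg_fib:
  assumes h: "((X, c), (Y, d), f) \<in> Ar (coalg_cat (Base P) K \<mu> \<nu>)"
    and a: "a \<in> Fib (coalg_doct P K \<kappa> \<mu> \<nu>) (Y, d)"
  shows "Rx P f a \<in> Fib (coalg_doct P K \<kappa> \<mu> \<nu>) (X, c)"
proof -
  let ?C = "Base P"
  from h have f: "f \<in> Ar ?C" "Dom ?C f = X" "Cod ?C f = Y" and f_hom: "Cmp ?C d f = Cmp ?C (fa K f) c"
    and c: "c \<in> Ar ?C" "Dom ?C c = X" "Cod ?C c = fo K X"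
    and d: "d \<in> Ar ?C" "Dom ?C d = Y" "Cod ?C d = fo K Y" "Y \<in> Ob ?C"
    by (auto simp: mem_coalg_arr_iff mem_coalg_ob_iff)
  from a have a_fib: "a \<in> Fib P Y" and a_le: "Le P Y a (Rx P d (\<kappa> Y a))"
    by (simp_all add: mem_coalg_doct_Fib_iff)
  have Kf: "fa K f \<in> Ar ?C" "Dom ?C (fa K f) = fo K X" "Cod ?C (fa K f) = fo K Y"
    using K_arr f by auto
  have \<kappa>a: "\<kappa> Y a \<in> Fib P (fo K Y)" using \<kappa>_fib d a_fib by simp
  have "Rx P c (\<kappa> X (Rx P f a)) = Rx P c (Rx P (fa K f) (\<kappa> Y a))"
    using \<kappa>_natural[of f a] f a_fib by simp
  also have "\<dots> = Rx P (Cmp ?C d f) (\<kappa> Y a)"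
    using Rx_cmp[of c "fa K f"] c Kf \<kappa>a f_hom by simp
  also have "\<dots> = Rx P f (Rx P d (\<kappa> Y a))"
    using Rx_cmp[of f d] f d \<kappa>a by simp
  finally have "Le P X (Rx P f a) (Rx P c (\<kappa> X (Rx P f a)))"
    using Rx_mono[of f a "Rx P d (\<kappa> Y a)"] Rx_fib[of d] f d a_fib a_le \<kappa>a by simp
  then show ?thesis
    using Rx_fib[of f a] f a_fib by (simp add: mem_coalg_doct_Fib_iff)
qed

lemma doctrine_coalg_doct: "doctrine (coalg_doct P K \<kappa> \<mu> \<nu>)" (is "doctrine ?PK")
  unfolding doctrine_def
proof (intro conjI ballI impI)
  show "category (Base ?PK)" using category_coalg_cat by simp
next
  fix A a assume "A \<in> Ob (Base ?PK)" "a \<in> Fib ?PK A"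
  then show "Le ?PK A a a"
    by (simp add: Le_refl coalg_ob_fst mem_coalg_doct_Fib_iff)
next
  fix A a b assume "A \<in> Ob (Base ?PK)" "a \<in> Fib ?PK A" "b \<in> Fib ?PK A" "Le ?PK A a b" "Le ?PK A b a"
  then show "a = b"
    by (intro Le_antisym[of "fst A"]) (simp_all add: coalg_ob_fst mem_coalg_doct_Fib_iff)
next
  fix A a b c assume "A \<in> Ob (Base ?PK)" "a \<in> Fib ?PK A" "b \<in> Fib ?PK A" "c \<in> Fib ?PK A"
    "Le ?PK A a b" "Le ?PK A b c"
  then show "Le ?PK A a c"
    by (simp, intro Le_trans[of "fst A" a b c]) (simp_all add: coalg_ob_fst mem_coalg_doct_Fib_iff)
next
  fix h a assume "h \<in> Ar (Base ?PK)" "a \<in> Fib ?PK (Cod (Base ?PK) h)"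
  then show "Rx ?PK h a \<in> Fib ?PK (Dom (Base ?PK) h)"
    using Rx_coalg_fib by (cases h) auto
next
  fix h a b assume "h \<in> Ar (Base ?PK)" "a \<in> Fib ?PK (Cod (Base ?PK) h)"
    "b \<in> Fib ?PK (Cod (Base ?PK) h)" "Le ?PK (Cod (Base ?PK) h) a b"
  then show "Le ?PK (Dom (Base ?PK) h) (Rx ?PK h a) (Rx ?PK h b)"
    using Rx_mono[of "snd (snd h)" a b]
    by (cases h) (simp add: mem_coalg_arr_iff mem_coalg_doct_Fib_iff)
next
  fix A a assume "A \<in> Ob (Base ?PK)" "a \<in> Fib ?PK A"
  then show "Rx ?PK (Idt (Base ?PK) A) a = a"
    by (simp add: Rx_idt coalg_ob_fst mem_coalg_doct_Fib_iff)
next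
  fix h g a assume "h \<in> Ar (Base ?PK)" "g \<in> Ar (Base ?PK)" "Cod (Base ?PK) h = Dom (Base ?PK) g"
    "a \<in> Fib ?PK (Cod (Base ?PK) g)"
  then show "Rx ?PK (Cmp (Base ?PK) g h) a = Rx ?PK h (Rx ?PK g a)"
    using Rx_cmp by (cases h, cases g) (simp add: mem_coalg_arr_iff mem_coalg_doct_Fib_iff)
qed

lemma one_arrow_forget: "one_arrow (coalg_doct P K \<kappa> \<mu> \<nu>) P forget_arr"
  unfolding one_arrow_def forget_arr_def fst_conv snd_conv coalg_doct_simps
  using doctrine doctrine_coalg_doct is_functor_forget[unfolded forget_arr_def fst_conv]
  by (simp add: mem_coalg_doct_Fib_iff)

end

locale doctrine_comonad =
  fixes P :: "('o,'a,'p) doct" and K :: "('o,'a,'o,'a) ftr" and \<kappa> :: "'o \<Rightarrow> 'p \<Rightarrow> 'p"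
    and \<mu> \<nu> :: "'o \<Rightarrow> 'a"
  assumes doct_comonad: "doct_comonad P K \<kappa> \<mu> \<nu>"
begin

sublocale doctrine_endo_arrow P K \<kappa>
  using doct_comonad by unfold_locales (simp add: doct_comonad_def)

sublocale cat_comonad "Base P" K \<mu> \<nu>
  using doct_comonad by unfold_locales (simp add: doct_comonad_def)

lemma \<kappa>_comult: "\<lbrakk>X \<in> Ob (Base P); a \<in> Fib P X\<rbrakk> \<Longrightarrow>
    Le P (fo K X) (\<kappa> X a) (Rx P (\<mu> X) (\<kappa> (fo K X) (\<kappa> X a)))"
  and \<kappa>_counit: "\<lbrakk>X \<in> Ob (Base P); a \<in> Fib P X\<rbrakk> \<Longrightarrow>
    Le P (fo K X) (\<kappa> X a) (Rx P (\<nu> X) a)"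
  using doct_comonad unfolding doct_comonad_def by blast+

abbreviation "PK \<equiv> coalg_doct P K \<kappa> \<mu> \<nu>"

lemma one_arrow_cofree: "one_arrow P PK (Khat, \<kappa>)"
  unfolding one_arrow_def fst_conv snd_conv coalg_doct_simps
proof (intro conjI ballI impI)
  show "doctrine P" "doctrine PK" by (fact doctrine doctrine_coalg_doct)+
  show "is_functor (Base P) CK Khat" by (rule is_functor_cofree)
next
  fix X a assume "X \<in> Ob (Base P)" "a \<in> Fib P X"
  then show "\<kappa> X a \<in> Fib PK (fo Khat X)"
    using \<kappa>_fib \<kappa>_comult by (simp add: cofree_def mem_coalg_doct_Fib_iff)
next
  fix X a b assume "X \<in> Ob (Base P)" "a \<in> Fib P X" "b \<in> Fib P X" "Le P X a b"
  then show "Le P (fst (fo Khat X)) (\<kappa> X a) (\<kappa> X b)"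
    using \<kappa>_mono by (simp add: cofree_def)
next
  fix t a assume "t \<in> Ar (Base P)" "a \<in> Fib P (Cod (Base P) t)"
  then show "\<kappa> (Dom (Base P) t) (Rx P t a) = Rx P (snd (snd (fa Khat t))) (\<kappa> (Cod (Base P) t) a)"
    using \<kappa>_natural by (simp add: cofree_def)
qed

lemma arr1_comp_forget_cofree: "arr1_comp forget_arr (Khat, \<kappa>) = (K, \<kappa>)"
  by (simp add: arr1_comp_def forget_arr_def cofree_def ftr_comp_def)

lemma two_arrow_counit: "two_arrow P P (arr1_comp forget_arr (Khat, \<kappa>)) arr1_id \<nu>"
  unfolding two_arrow_def arr1_comp_forget_cofree
  using one_arrow one_arrow_arr1_id[OF doctrine] nat_trans_nu \<kappa>_counit
  by (simp add: arr1_id_def)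

lemma two_arrow_unit: "two_arrow PK PK arr1_id (arr1_comp (Khat, \<kappa>) forget_arr) (coalg_unit K \<mu>)"
  unfolding two_arrow_def
proof (intro conjI ballI)
  show "one_arrow PK PK arr1_id" by (rule one_arrow_arr1_id[OF doctrine_coalg_doct])
  show "one_arrow PK PK (arr1_comp (Khat, \<kappa>) forget_arr)"
    by (rule one_arrow_arr1_comp[OF one_arrow_forget one_arrow_cofree])
  show "nat_trans (Base PK) (Base PK) (fst arr1_id) (fst (arr1_comp (Khat, \<kappa>) forget_arr)) (coalg_unit K \<mu>)"
    using nat_trans_coalg_unit by (simp add: arr1_id_def arr1_comp_def)
next
  fix A a assume "A \<in> Ob (Base PK)" "a \<in> Fib PK A"
  then show "Le PK (fo (fst arr1_id) A) (snd arr1_id A a)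
      (Rx PK (coalg_unit K \<mu> A) (snd (arr1_comp (Khat, \<kappa>) forget_arr) A a))"
    by (simp add: mem_coalg_doct_Fib_iff arr1_id_def ftr_id_def arr1_comp_def forget_arr_def
        coalg_unit_def)
qed

lemma adjunction_forget_cofree: "adjunction PK P forget_arr (Khat, \<kappa>) (coalg_unit K \<mu>) \<nu>"
  unfolding adjunction_def coalg_doct_simps fst_conv
  using one_arrow_forget one_arrow_cofree two_arrow_unit two_arrow_counit triangle_forget triangle_cofree
  by blast

end

theorem corollary6p5:
  fixes P :: "('o,'a,'p) doct"
    and K :: "('o,'a,'o,'a) ftr"
    and \<kappa> :: "'o \<Rightarrow> 'p \<Rightarrow> 'p"
    and \<mu> \<nu> :: "'o \<Rightarrow> 'a"
  assumes "doctrine P"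
    and "doct_comonad P K \<kappa> \<mu> \<nu>"
  shows "one_arrow P (coalg_doct P K \<kappa> \<mu> \<nu>) (cofree (Base P) K \<mu>, \<kappa>)
       \<and> adjunction (coalg_doct P K \<kappa> \<mu> \<nu>) P forget_arr (cofree (Base P) K \<mu>, \<kappa>)
                    (coalg_unit K \<mu>) \<nu>"
proof -
  (* the hypothesis doctrine P is already part of doct_comonad P K kappa mu nu *)
  interpret doctrine_comonad P K \<kappa> \<mu> \<nu> by unfold_locales (fact assms(2))
  show ?thesis using one_arrow_cofree adjunction_forget_cofree by blast
qed

end
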